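(* Let $A$ be a meet-semilattice and $\kappa$ a regular cardinal. Then $A$ is a $\kappa$-frame if and only if $\mathcal{BL}_\kappa A=A$.
   Context: A meet-semilattice is a poset with all finite meets. An existing join $\bigvee S$ is distributive if $a\wedge\bigvee S=\bigvee\{a\wedge s:s\in S\}$ for all $a$. A D-ideal of $A$ is a downset containing $\bigvee S$ for each subset $S$ of it with distributive join; $\mathcal{BL} A$ is the frame of D-ideals ordered by inclusion, and $A$ is identified with the sub-meet-semilattice $\{{\downarrow}a:a\in A\}$ of $\mathcal{BL} A$. A $\kappa$-join is a join of fewer than $\kappa$ elements; $A$ is a $\kappa$-frame if all $\kappa$-joins exist in $A$ and are distributive. $\mathcal{BL}_\kappa A$ is the sub-$\kappa$-frame of $\mathcal{BL} A$ generated by $A$ (the smallest subset containing $A$ closed under finite meets and $\kappa$-joins computed in $\mathcal{BL} A$). *)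

theory Defs
  imports Main
begin

text \<open>A meet-semilattice (a poset with all finite meets, including the empty meet,
  i.e. a top element) is modelled by the type class bounded_semilattice_inf_top.
  The cardinal kappa is modelled by a cardinal order relation r on some type.\<close>

definition is_join :: "'a::order set \<Rightarrow> 'a \<Rightarrow> bool" where
  "is_join S j \<longleftrightarrow> (\<forall>s\<in>S. s \<le> j) \<and> (\<forall>u. (\<forall>s\<in>S. s \<le> u) \<longrightarrow> j \<le> u)"

definition distributive_join :: "'a::semilattice_inf set \<Rightarrow> bool" where
  "distributive_join S \<longleftrightarrow> (\<exists>j. is_join S j \<and> (\<forall>a. is_join ((\<lambda>s. inf a s) ` S) (inf a j)))"

definition D_ideal :: "'a::semilattice_inf set \<Rightarrow> bool" where
  "D_ideal I \<longleftrightarrow> (\<forall>x y. x \<in> I \<longrightarrow> y \<le> x \<longrightarrow> y \<in> I)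
     \<and> (\<forall>S j. S \<subseteq> I \<longrightarrow> distributive_join S \<longrightarrow> is_join S j \<longrightarrow> j \<in> I)"

definition BL :: "'a::semilattice_inf set set" where
  "BL = {I. D_ideal I}"

text \<open>The principal downset of a; A is identified with {principal a | a}.\<close>
definition principal :: "'a::order \<Rightarrow> 'a set" where
  "principal a = {x. x \<le> a}"

definition BL_join :: "'a::semilattice_inf set set \<Rightarrow> 'a set" where
  "BL_join F = \<Inter>{I. D_ideal I \<and> \<Union>F \<subseteq> I}"

definition kappa_frame :: "'k rel \<Rightarrow> 'a::semilattice_inf itself \<Rightarrow> bool" where
  "kappa_frame r _ \<longleftrightarrow> (\<forall>S::'a set. (card_of S, r) \<in> ordLess \<longrightarrow> distributive_join S)"

definition BL_kappa :: "'k rel \<Rightarrow> 'a::bounded_semilattice_inf_top set set" where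
  "BL_kappa r = \<Inter>{X. X \<subseteq> BL \<and> range principal \<subseteq> X \<and> UNIV \<in> X
      \<and> (\<forall>I\<in>X. \<forall>J\<in>X. I \<inter> J \<in> X)
      \<and> (\<forall>F. F \<subseteq> X \<longrightarrow> (card_of F, r) \<in> ordLess \<longrightarrow> BL_join F \<in> X)}"

end

theory Submission
  imports Defs
begin

text \<open>Identify \<open>a\<close> with the principal ideal \<open>\<down>a\<close>. For \<open>S \<subseteq> A\<close>, the join of the ideals
  \<open>\<down>s\<close> (\<open>s \<in> S\<close>) in \<open>\<B>\<L> A\<close> is \<open>\<down>j\<close> exactly when \<open>j\<close> is a distributive join of \<open>S\<close> in \<open>A\<close>.
  If that join is \<open>\<down>j\<close>, then \<open>j\<close> is distributive because, whenever \<open>u\<close> bounds all \<open>a \<sqinter> s\<close>,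
  the D-ideal \<open>{x. a \<sqinter> x \<le> u}\<close> contains all \<open>s\<close> and hence \<open>j\<close>. As the principal ideals
  contain \<open>A\<close> and are closed under finite meets, they are closed under \<open>\<kappa>\<close>-joins in \<open>\<B>\<L> A\<close>,
  and then equal \<open>\<B>\<L>\<^sub>\<kappa> A\<close>, precisely when \<open>A\<close> is a \<open>\<kappa>\<close>-frame.\<close>

lemma is_join_unique:
  fixes j :: "'a::order"
  shows "is_join S j \<Longrightarrow> is_join S j' \<Longrightarrow> j = j'"
  unfolding is_join_def by (meson antisym)

lemma BL_join_least: "D_ideal I \<Longrightarrow> \<Union>F \<subseteq> I \<Longrightarrow> BL_join F \<subseteq> I"
  unfolding BL_join_def by blast

lemma BL_join_upper: "\<Union>F \<subseteq> BL_join F"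
  unfolding BL_join_def by blast

lemma mem_principal_iff: "x \<in> principal a \<longleftrightarrow> x \<le> a"
  unfolding principal_def by simp

lemma principal_subset_principal_iff: "principal a \<subseteq> principal b \<longleftrightarrow> a \<le> (b::'a::order)"
  unfolding principal_def by (auto intro: order_trans)

lemma inj_principal: "inj (principal :: 'a::order \<Rightarrow> 'a set)"
  by (rule injI) (simp add: set_eq_subset principal_subset_principal_iff order.antisym)

lemma principal_inf: "principal (a::'a::semilattice_inf) \<inter> principal b = principal (inf a b)"
  unfolding principal_def by auto

lemma principal_top: "principal (top::'a::order_top) = UNIV"
  unfolding principal_def by auto

lemma D_ideal_principal: "D_ideal (principal (a::'a::semilattice_inf))"
  unfolding D_ideal_def principal_def is_join_def by (auto intro: order_trans)

lemma D_ideal_inf_le: "D_ideal {x::'a::semilattice_inf. inf a x \<le> u}"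
  unfolding D_ideal_def
proof (intro conjI allI impI)
  fix x y :: 'a
  assume "x \<in> {x. inf a x \<le> u}" "y \<le> x"
  then show "y \<in> {x. inf a x \<le> u}"
    by (auto intro: order_trans[OF inf_mono[OF order_refl]])
next
  fix T and t :: 'a
  assume T: "T \<subseteq> {x. inf a x \<le> u}" "distributive_join T" "is_join T t"
  then obtain t' where t': "is_join T t'" "is_join ((\<lambda>s. inf a s) ` T) (inf a t')"
    unfolding distributive_join_def by blast
  have "t' = t"
    using is_join_unique t'(1) T(3) by blast
  moreover have "\<forall>x\<in>(\<lambda>s. inf a s) ` T. x \<le> u"
    using T(1) by blast
  ultimately show "t \<in> {x. inf a x \<le> u}"
    using t'(2) unfolding is_join_def by blast
qed

lemma D_ideal_join_mem:
  "D_ideal I \<Longrightarrow> S \<subseteq> I \<Longrightarrow> distributive_join S \<Longrightarrow> is_join S j \<Longrightarrow> j \<in> I"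
  unfolding D_ideal_def by blast

lemma D_ideal_downward_closed: "D_ideal I \<Longrightarrow> x \<in> I \<Longrightarrow> y \<le> x \<Longrightarrow> y \<in> I"
  unfolding D_ideal_def by blast

lemma D_ideal_Inter:
  assumes "\<And>I. I \<in> \<I> \<Longrightarrow> D_ideal I"
  shows "D_ideal (\<Inter>\<I>)"
  unfolding D_ideal_def
proof (intro conjI allI impI)
  fix x y assume "x \<in> \<Inter>\<I>" "y \<le> x"
  then show "y \<in> \<Inter>\<I>"
    using assms D_ideal_downward_closed by blast
next
  fix S j assume S: "S \<subseteq> \<Inter>\<I>" "distributive_join S" "is_join S j"
  show "j \<in> \<Inter>\<I>"
  proof
    fix I assume "I \<in> \<I>"
    with S(1) have "S \<subseteq> I" by blast
    with assms[OF \<open>I \<in> \<I>\<close>] show "j \<in> I"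
      using S(2,3) by (rule D_ideal_join_mem)
  qed
qed

lemma D_ideal_BL_join: "D_ideal (BL_join F)"
  unfolding BL_join_def by (rule D_ideal_Inter) simp

lemma union_principal_subset_iff:
  "\<Union>(principal ` S) \<subseteq> I \<longleftrightarrow> (\<forall>s\<in>S. principal s \<subseteq> I)"
  by blast

lemma principal_subset_iff: "principal s \<subseteq> D \<longleftrightarrow> s \<in> D" if "D_ideal D"
  using that unfolding D_ideal_def principal_def by blast

lemma distributive_join_if_BL_join_principal:
  fixes S :: "'a::semilattice_inf set"
  assumes j: "BL_join (principal ` S) = principal j"
  shows "distributive_join S \<and> is_join S j"
proof -
  have j_mem: "j \<in> D" if "D_ideal D" "S \<subseteq> D" for D
  proof -
    have "BL_join (principal ` S) \<subseteq> D"
      using that principal_subset_iff[OF that(1)]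
      by (intro BL_join_least) (auto simp: union_principal_subset_iff)
    then show ?thesis
      using j by (auto simp: principal_def)
  qed
  have S_below: "s \<le> j" if "s \<in> S" for s
    using BL_join_upper[of "principal ` S"] that j by (auto simp: principal_def)
  have "is_join S j"
    unfolding is_join_def
    using S_below j_mem[OF D_ideal_principal] by (auto simp: principal_def)
  moreover have "is_join ((\<lambda>s. inf a s) ` S) (inf a j)" for a
    unfolding is_join_def
  proof (intro conjI allI impI ballI)
    fix x assume "x \<in> (\<lambda>s. inf a s) ` S"
    then show "x \<le> inf a j" using S_below by (auto intro: le_infI2)
  next
    fix u assume "\<forall>x\<in>(\<lambda>s. inf a s) ` S. x \<le> u"
    then show "inf a j \<le> u"
      using j_mem[OF D_ideal_inf_le, of a u] by blast
  qed
  ultimately show ?thesis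
    unfolding distributive_join_def by blast
qed

lemma BL_join_principal_if_distributive_join:
  fixes S :: "'a::semilattice_inf set"
  assumes dj: "distributive_join S" and j: "is_join S j"
  shows "BL_join (principal ` S) = principal j"
proof
  have "\<forall>s\<in>S. principal s \<subseteq> principal j"
    using j by (simp add: principal_subset_principal_iff is_join_def)
  then show "BL_join (principal ` S) \<subseteq> principal j"
    by (intro BL_join_least D_ideal_principal) (simp only: union_principal_subset_iff)
next
  have "S \<subseteq> BL_join (principal ` S)"
    using BL_join_upper[of "principal ` S"]
    unfolding union_principal_subset_iff principal_subset_iff[OF D_ideal_BL_join] by blast
  then have "j \<in> BL_join (principal ` S)"
    using D_ideal_join_mem[OF D_ideal_BL_join _ dj j] by blast
  then show "principal j \<subseteq> BL_join (principal ` S)"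
    using principal_subset_iff[OF D_ideal_BL_join] by blast
qed

definition BL_kappa_closed :: "'k rel \<Rightarrow> 'a::bounded_semilattice_inf_top set set \<Rightarrow> bool" where
  "BL_kappa_closed r X \<longleftrightarrow> X \<subseteq> BL \<and> range principal \<subseteq> X \<and> UNIV \<in> X
      \<and> (\<forall>I\<in>X. \<forall>J\<in>X. I \<inter> J \<in> X)
      \<and> (\<forall>F. F \<subseteq> X \<longrightarrow> (card_of F, r) \<in> ordLess \<longrightarrow> BL_join F \<in> X)"

lemma mem_BL_kappa_iff: "I \<in> BL_kappa r \<longleftrightarrow> (\<forall>X. BL_kappa_closed r X \<longrightarrow> I \<in> X)"
  unfolding BL_kappa_def BL_kappa_closed_def by blast

lemma BL_kappa_least: "BL_kappa_closed r X \<Longrightarrow> BL_kappa r \<subseteq> X"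
  using mem_BL_kappa_iff by blast

lemma range_principal_subset_BL_kappa: "range principal \<subseteq> BL_kappa r"
  unfolding mem_BL_kappa_iff subset_iff BL_kappa_closed_def by blast

lemma BL_join_mem_BL_kappa:
  assumes "F \<subseteq> BL_kappa r" "(card_of F, r) \<in> ordLess"
  shows "BL_join F \<in> BL_kappa r"
  unfolding mem_BL_kappa_iff
proof (intro allI impI)
  fix X :: "'a set set" assume "BL_kappa_closed r X"
  moreover from this have "F \<subseteq> X"
    using assms(1) BL_kappa_least by blast
  ultimately show "BL_join F \<in> X"
    using assms(2) unfolding BL_kappa_closed_def by blast
qed

lemma kappa_frame_BL_join_principal:
  fixes F :: "'a::semilattice_inf set set"
  assumes "kappa_frame r TYPE('a)" "F \<subseteq> range principal" "(card_of F, r) \<in> ordLess"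
  shows "BL_join F \<in> range principal"
proof -
  obtain S where S: "F = principal ` S"
    using assms(2) subset_image_iff by blast
  have "inj_on principal S"
    using inj_principal by (rule inj_on_subset) simp
  then have "(card_of S, card_of F) \<in> ordLeq"
    using S by (intro card_of_ordLeq[THEN iffD1] exI[of _ principal]) simp
  then have "(card_of S, r) \<in> ordLess"
    using assms(3) by (rule ordLeq_ordLess_trans)
  then have "distributive_join S"
    using assms(1) unfolding kappa_frame_def by blast
  moreover obtain j where "is_join S j"
    using \<open>distributive_join S\<close> unfolding distributive_join_def by blast
  ultimately show ?thesis
    using S BL_join_principal_if_distributive_join by blast
qed

lemma kappa_frame_BL_kappa_closed_range_principal:
  assumes "kappa_frame r TYPE('a::bounded_semilattice_inf_top)"
  shows "BL_kappa_closed r (range principal :: 'a set set)"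
  unfolding BL_kappa_closed_def
proof (intro conjI ballI allI impI order_refl)
  show "range principal \<subseteq> (BL :: 'a set set)"
    using D_ideal_principal by (auto simp: BL_def)
  show "UNIV \<in> range (principal :: 'a \<Rightarrow> 'a set)"
    using principal_top[symmetric] by (rule range_eqI)
  show "I \<inter> J \<in> range principal" if "I \<in> range principal" "J \<in> range principal" for I J :: "'a set"
    using that by (auto simp: principal_inf)
  show "BL_join F \<in> range principal" if "F \<subseteq> range principal" "(card_of F, r) \<in> ordLess"
    for F :: "'a set set"
    using kappa_frame_BL_join_principal[OF assms that] .
qed

theorem theorem4p2:
  fixes r :: "'k rel"
  assumes "Cinfinite r" and "regularCard r"
  shows "kappa_frame r TYPE('a::bounded_semilattice_inf_top)
           \<longleftrightarrow> (BL_kappa r :: 'a set set) = range principal"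
proof
  assume "kappa_frame r TYPE('a)"
  then have "BL_kappa r \<subseteq> (range principal :: 'a set set)"
    by (rule BL_kappa_least[OF kappa_frame_BL_kappa_closed_range_principal])
  then show "(BL_kappa r :: 'a set set) = range principal"
    using range_principal_subset_BL_kappa by (rule subset_antisym)
next
  assume BL_kappa: "(BL_kappa r :: 'a set set) = range principal"
  show "kappa_frame r TYPE('a)"
    unfolding kappa_frame_def
  proof (intro allI impI)
    fix S :: "'a set"
    assume "(card_of S, r) \<in> ordLess"
    with card_of_image have "(card_of (principal ` S), r) \<in> ordLess"
      by (rule ordLeq_ordLess_trans)
    then have "BL_join (principal ` S) \<in> BL_kappa r"
      using BL_kappa by (intro BL_join_mem_BL_kappa) auto
    then obtain j where "BL_join (principal ` S) = principal j"
      using BL_kappa by auto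
    then show "distributive_join S"
      using distributive_join_if_BL_join_principal by blast
  qed
qed

end
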